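(* Let $L_0<L_1$, $\varepsilon>0$, and for $h=\frac{L_1-L_0}{J}$ ($J\in\mathbb{N}^*$) let the time step $l=l(h)>0$ satisfy $l=o(h^{2+\varepsilon})$ as $h\to0$; set $\sigma=\frac{2l}{h^2}$. Let $(\alpha_n)_n$ be a sequence in $[0,1]$ and let $A_n\in\mathcal{M}_{J+1}(\mathbb{C})$ be the tridiagonal matrix (indices $0,\dots,J$) with $A_n(j,j)=\frac{i-4\sigma\alpha_n}{2}$, $A_n(j,j-1)=A_n(j,j+1)=\sigma\alpha_n$, except $A_n(0,1)=A_n(J,J-1)=2\sigma\alpha_n$, other entries zero. Let $\mathcal{L}_{A_n}(X)=A_nX+XA_n^T$. Then there is a constant $C>0$ such that for $h$ small enough, for all $n$ and all $X\in\mathcal{M}_{J+1}(\mathbb{R})$, $$\frac12\|X\|\leq(1-Ch^{\varepsilon})\|X\|\leq\|\mathcal{L}_{A_n}(X)\|\leq(1+Ch^{\varepsilon})\|X\|\leq\frac32\|X\|.$$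
   Context: $\|\cdot\|$ denotes the matrix norm used in the paper (e.g. the Frobenius norm $\|X\|=(\sum_{j,m}|X_{j,m}|^2)^{1/2}$). $A_n$ is the matrix multiplying the new time level in a finite-difference scheme for the 2D NLS equation with Neumann boundary conditions. *)

theory Defs
  imports "HOL-Analysis.Analysis"
begin

text \<open>Matrices in M_{J+1} are represented as functions nat => nat => 'a,
  only the entries with indices in {0..J} being relevant.\<close>

definition frob_norm :: "nat \<Rightarrow> (nat \<Rightarrow> nat \<Rightarrow> 'a::real_normed_vector) \<Rightarrow> real" where
  "frob_norm J X = sqrt (\<Sum>j\<in>{0..J}. \<Sum>m\<in>{0..J}. (norm (X j m))\<^sup>2)"

definition A_mat :: "nat \<Rightarrow> real \<Rightarrow> real \<Rightarrow> nat \<Rightarrow> nat \<Rightarrow> complex" where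
  "A_mat J \<sigma> a j k =
     (if j = k then (\<i> - complex_of_real (4 * \<sigma> * a)) / 2
      else if (j = 0 \<and> k = 1) \<or> (j = J \<and> k + 1 = J) then complex_of_real (2 * \<sigma> * a)
      else if k = j + 1 \<or> j = k + 1 then complex_of_real (\<sigma> * a)
      else 0)"

definition L_op :: "nat \<Rightarrow> (nat \<Rightarrow> nat \<Rightarrow> complex) \<Rightarrow> (nat \<Rightarrow> nat \<Rightarrow> complex) \<Rightarrow> nat \<Rightarrow> nat \<Rightarrow> complex" where
  "L_op J A X j m = (\<Sum>k\<in>{0..J}. A j k * X k m) + (\<Sum>k\<in>{0..J}. X j k * A m k)"

end

theory Submission
  imports Defs
begin

text \<open>
  Write \<open>A\<^sub>n = \<i>/2 \<cdot> I + \<sigma>\<alpha>\<^sub>n B\<close> with \<open>B\<close> the real Neumann second-difference matrix.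
  For a real matrix \<open>X\<close>, \<open>A\<^sub>n X + X A\<^sub>n\<^sup>T = \<i> X + \<sigma>\<alpha>\<^sub>n (B X + X B\<^sup>T)\<close> has imaginary part \<open>X\<close> and
  real part \<open>\<sigma>\<alpha>\<^sub>n (B X + X B\<^sup>T)\<close>, so its squared norm is \<open>\<parallel>X\<parallel>\<^sup>2 + (\<sigma>\<alpha>\<^sub>n)\<^sup>2 \<parallel>B X + X B\<^sup>T\<parallel>\<^sup>2\<close>.
  Every row and column of \<open>B\<close> has absolute sum at most 6, so by the Schur test
  \<open>\<parallel>B X + X B\<^sup>T\<parallel> \<le> 12 \<parallel>X\<parallel>\<close>, and the norm of the image lies between \<open>\<parallel>X\<parallel>\<close> and
  \<open>(1 + 12\<sigma>) \<parallel>X\<parallel>\<close>.  Finally \<open>l = o(h\<^bsup>2+\<epsilon>\<^esup>)\<close> gives \<open>\<sigma> \<le> 2 h\<^sup>\<epsilon>\<close> for small \<open>h\<close>,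
  so \<open>C = 24\<close> works.
\<close>

lemma power2_sum_mult_le:
  fixes w x :: "'a \<Rightarrow> real"
  shows "(\<Sum>k\<in>I. w k * x k)\<^sup>2 \<le> (\<Sum>k\<in>I. \<bar>w k\<bar>) * (\<Sum>k\<in>I. \<bar>w k\<bar> * (x k)\<^sup>2)"
proof -
  have split: "w k * x k = sqrt \<bar>w k\<bar> * (sqrt \<bar>w k\<bar> * sgn (w k) * x k)" for k
    by (simp add: mult.assoc[symmetric] abs_mult_sgn)
  have square: "(sqrt \<bar>w k\<bar> * sgn (w k) * x k)\<^sup>2 = \<bar>w k\<bar> * (x k)\<^sup>2" for k
    by (cases "w k = 0") (simp_all add: power_mult_distrib sgn_if)
  have "(\<Sum>k\<in>I. w k * x k)\<^sup>2
      \<le> (\<Sum>k\<in>I. (sqrt \<bar>w k\<bar>)\<^sup>2) * (\<Sum>k\<in>I. (sqrt \<bar>w k\<bar> * sgn (w k) * x k)\<^sup>2)"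
    unfolding split by (rule Cauchy_Schwarz_ineq_sum)
  then show ?thesis
    by (simp add: square)
qed

lemma schur_test:
  fixes b :: "'a \<Rightarrow> 'a \<Rightarrow> real" and x :: "'a \<Rightarrow> real"
  assumes "R \<ge> 0"
    and row: "\<And>j. j \<in> I \<Longrightarrow> (\<Sum>k\<in>I. \<bar>b j k\<bar>) \<le> R"
    and col: "\<And>k. k \<in> I \<Longrightarrow> (\<Sum>j\<in>I. \<bar>b j k\<bar>) \<le> R"
  shows "(\<Sum>j\<in>I. (\<Sum>k\<in>I. b j k * x k)\<^sup>2) \<le> R\<^sup>2 * (\<Sum>k\<in>I. (x k)\<^sup>2)"
proof -
  have "(\<Sum>j\<in>I. (\<Sum>k\<in>I. b j k * x k)\<^sup>2) \<le> (\<Sum>j\<in>I. R * (\<Sum>k\<in>I. \<bar>b j k\<bar> * (x k)\<^sup>2))"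
  proof (rule sum_mono)
    fix j assume "j \<in> I"
    have "(\<Sum>k\<in>I. b j k * x k)\<^sup>2 \<le> (\<Sum>k\<in>I. \<bar>b j k\<bar>) * (\<Sum>k\<in>I. \<bar>b j k\<bar> * (x k)\<^sup>2)"
      by (rule power2_sum_mult_le)
    also have "\<dots> \<le> R * (\<Sum>k\<in>I. \<bar>b j k\<bar> * (x k)\<^sup>2)"
      using row[OF \<open>j \<in> I\<close>] by (intro mult_right_mono) (simp_all add: sum_nonneg)
    finally show "(\<Sum>k\<in>I. b j k * x k)\<^sup>2 \<le> R * (\<Sum>k\<in>I. \<bar>b j k\<bar> * (x k)\<^sup>2)" .
  qed
  also have "\<dots> = R * (\<Sum>j\<in>I. \<Sum>k\<in>I. \<bar>b j k\<bar> * (x k)\<^sup>2)"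
    by (simp add: sum_distrib_left)
  also have "\<dots> = R * (\<Sum>k\<in>I. (\<Sum>j\<in>I. \<bar>b j k\<bar>) * (x k)\<^sup>2)"
    by (subst sum.swap) (simp add: sum_distrib_right)
  also have "\<dots> \<le> R * (\<Sum>k\<in>I. R * (x k)\<^sup>2)"
    using col \<open>R \<ge> 0\<close> by (intro mult_left_mono sum_mono mult_right_mono) auto
  also have "\<dots> = R\<^sup>2 * (\<Sum>k\<in>I. (x k)\<^sup>2)"
    by (simp add: sum_distrib_left power2_eq_square mult.assoc)
  finally show ?thesis .
qed

lemma frob_norm_nonneg: "frob_norm J X \<ge> 0"
  by (simp add: frob_norm_def sum_nonneg)

lemma frob_norm_power2: "(frob_norm J X)\<^sup>2 = (\<Sum>j\<in>{0..J}. \<Sum>m\<in>{0..J}. (norm (X j m))\<^sup>2)"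
  by (simp add: frob_norm_def sum_nonneg)

lemma frob_norm_eq_L2_set:
  "frob_norm J X = L2_set (\<lambda>(j, m). norm (X j m)) ({0..J} \<times> {0..J})"
  by (simp add: frob_norm_def L2_set_def sum.cartesian_product case_prod_beta)

lemma frob_norm_add_le:
  "frob_norm J (\<lambda>j m. X j m + Y j m) \<le> frob_norm J X + frob_norm J Y"
proof -
  let ?I = "{0..J} \<times> {0..J}"
  have "L2_set (\<lambda>(j, m). norm (X j m + Y j m)) ?I
      \<le> L2_set (\<lambda>p. (\<lambda>(j, m). norm (X j m)) p + (\<lambda>(j, m). norm (Y j m)) p) ?I"
    by (rule L2_set_mono) (auto intro: norm_triangle_ineq)
  also have "\<dots> \<le> L2_set (\<lambda>(j, m). norm (X j m)) ?I + L2_set (\<lambda>(j, m). norm (Y j m)) ?I"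
    by (rule L2_set_triangle_ineq)
  finally show ?thesis
    by (simp add: frob_norm_eq_L2_set)
qed

lemma frob_norm_le_mult_frob_normI:
  assumes "R \<ge> 0"
    and "(\<Sum>j\<in>{0..J}. \<Sum>m\<in>{0..J}. (norm (Y j m))\<^sup>2)
           \<le> R\<^sup>2 * (\<Sum>j\<in>{0..J}. \<Sum>m\<in>{0..J}. (norm (X j m))\<^sup>2)"
  shows "frob_norm J Y \<le> R * frob_norm J X"
proof -
  have "frob_norm J Y \<le> sqrt (R\<^sup>2 * (\<Sum>j\<in>{0..J}. \<Sum>m\<in>{0..J}. (norm (X j m))\<^sup>2))"
    unfolding frob_norm_def using assms(2) by (rule real_sqrt_le_mono)
  then show ?thesis
    using \<open>R \<ge> 0\<close> by (simp add: frob_norm_def real_sqrt_mult)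
qed

lemma frob_norm_mult_left_le:
  fixes b X :: "nat \<Rightarrow> nat \<Rightarrow> real"
  assumes "R \<ge> 0"
    and "\<And>j. j \<in> {0..J} \<Longrightarrow> (\<Sum>k\<in>{0..J}. \<bar>b j k\<bar>) \<le> R"
    and "\<And>k. k \<in> {0..J} \<Longrightarrow> (\<Sum>j\<in>{0..J}. \<bar>b j k\<bar>) \<le> R"
  shows "frob_norm J (\<lambda>j m. \<Sum>k\<in>{0..J}. b j k * X k m) \<le> R * frob_norm J X"
proof (rule frob_norm_le_mult_frob_normI[OF \<open>R \<ge> 0\<close>])
  have "(\<Sum>j\<in>{0..J}. \<Sum>m\<in>{0..J}. (\<Sum>k\<in>{0..J}. b j k * X k m)\<^sup>2)
      = (\<Sum>m\<in>{0..J}. \<Sum>j\<in>{0..J}. (\<Sum>k\<in>{0..J}. b j k * X k m)\<^sup>2)"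
    by (rule sum.swap)
  also have "\<dots> \<le> (\<Sum>m\<in>{0..J}. R\<^sup>2 * (\<Sum>k\<in>{0..J}. (X k m)\<^sup>2))"
    using assms by (intro sum_mono schur_test)
  also have "\<dots> = R\<^sup>2 * (\<Sum>j\<in>{0..J}. \<Sum>m\<in>{0..J}. (X j m)\<^sup>2)"
    by (subst sum.swap) (simp add: sum_distrib_left)
  finally show "(\<Sum>j\<in>{0..J}. \<Sum>m\<in>{0..J}. (norm (\<Sum>k\<in>{0..J}. b j k * X k m))\<^sup>2)
      \<le> R\<^sup>2 * (\<Sum>j\<in>{0..J}. \<Sum>m\<in>{0..J}. (norm (X j m))\<^sup>2)"
    by simp
qed

lemma frob_norm_mult_right_le:
  fixes b X :: "nat \<Rightarrow> nat \<Rightarrow> real"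
  assumes "R \<ge> 0"
    and "\<And>j. j \<in> {0..J} \<Longrightarrow> (\<Sum>k\<in>{0..J}. \<bar>b j k\<bar>) \<le> R"
    and "\<And>k. k \<in> {0..J} \<Longrightarrow> (\<Sum>j\<in>{0..J}. \<bar>b j k\<bar>) \<le> R"
  shows "frob_norm J (\<lambda>j m. \<Sum>k\<in>{0..J}. X j k * b m k) \<le> R * frob_norm J X"
proof (rule frob_norm_le_mult_frob_normI[OF \<open>R \<ge> 0\<close>])
  have "(\<Sum>j\<in>{0..J}. \<Sum>m\<in>{0..J}. (\<Sum>k\<in>{0..J}. b m k * X j k)\<^sup>2)
      \<le> (\<Sum>j\<in>{0..J}. R\<^sup>2 * (\<Sum>k\<in>{0..J}. (X j k)\<^sup>2))"
    using assms by (intro sum_mono schur_test)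
  then show "(\<Sum>j\<in>{0..J}. \<Sum>m\<in>{0..J}. (norm (\<Sum>k\<in>{0..J}. X j k * b m k))\<^sup>2)
      \<le> R\<^sup>2 * (\<Sum>j\<in>{0..J}. \<Sum>m\<in>{0..J}. (norm (X j m))\<^sup>2)"
    by (simp add: sum_distrib_left mult.commute)
qed

definition neumann_second_diff :: "nat \<Rightarrow> nat \<Rightarrow> nat \<Rightarrow> real" where
  "neumann_second_diff J j k =
     (if j = k then -2
      else if (j = 0 \<and> k = 1) \<or> (j = J \<and> k + 1 = J) then 2
      else if k = j + 1 \<or> j = k + 1 then 1
      else 0)"

lemma A_mat_eq:
  "A_mat J \<sigma> a j k = (if j = k then \<i> / 2 else 0) + complex_of_real (\<sigma> * a * neumann_second_diff J j k)"
  by (auto simp: A_mat_def neumann_second_diff_def diff_divide_distrib)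

lemma sum_indicator_three_le:
  fixes J a b c :: nat
  shows "(\<Sum>k\<in>{0..J}. if k \<in> {a, b, c} then 2 else 0 :: real) \<le> 6"
proof -
  have "(\<Sum>k\<in>{0..J}. if k \<in> {a, b, c} then 2 else 0 :: real) = 2 * real (card ({0..J} \<inter> {a, b, c}))"
    unfolding sum.If_cases[OF finite_atLeastAtMost] Collect_mem_eq by simp
  also have "card ({0..J} \<inter> {a, b, c}) \<le> card {a, b, c}"
    by (rule card_mono) auto
  also have "card {a, b, c} \<le> 3"
    by (simp add: card_insert_if)
  finally show ?thesis by simp
qed

lemma neumann_second_diff_row_sum_le: "(\<Sum>k\<in>{0..J}. \<bar>neumann_second_diff J j k\<bar>) \<le> 6"
proof -
  have "(\<Sum>k\<in>{0..J}. \<bar>neumann_second_diff J j k\<bar>) \<le> (\<Sum>k\<in>{0..J}. if k \<in> {j - 1, j, j + 1} then 2 else 0)"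
    by (rule sum_mono) (auto simp: neumann_second_diff_def)
  also have "\<dots> \<le> 6"
    by (rule sum_indicator_three_le)
  finally show ?thesis .
qed

lemma neumann_second_diff_col_sum_le: "(\<Sum>j\<in>{0..J}. \<bar>neumann_second_diff J j k\<bar>) \<le> 6"
proof -
  have "(\<Sum>j\<in>{0..J}. \<bar>neumann_second_diff J j k\<bar>) \<le> (\<Sum>j\<in>{0..J}. if j \<in> {k - 1, k, k + 1} then 2 else 0)"
    by (rule sum_mono) (auto simp: neumann_second_diff_def)
  also have "\<dots> \<le> 6"
    by (rule sum_indicator_three_le)
  finally show ?thesis .
qed

lemma L_op_A_mat_real:
  fixes X :: "nat \<Rightarrow> nat \<Rightarrow> real"
  assumes "j \<le> J" "m \<le> J"
  shows "L_op J (A_mat J \<sigma> a) (\<lambda>j m. complex_of_real (X j m)) j m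
    = Complex (\<sigma> * a * ((\<Sum>k\<in>{0..J}. neumann_second_diff J j k * X k m) + (\<Sum>k\<in>{0..J}. X j k * neumann_second_diff J m k)))
              (X j m)"
proof -
  have "A_mat J \<sigma> a j k * X k m
      = (if j = k then \<i> / 2 * X j m else 0) + complex_of_real (\<sigma> * a * (neumann_second_diff J j k * X k m))" for k
    by (simp add: A_mat_eq distrib_right mult.assoc)
  then have left: "(\<Sum>k\<in>{0..J}. A_mat J \<sigma> a j k * complex_of_real (X k m))
      = \<i> / 2 * X j m + complex_of_real (\<sigma> * a * (\<Sum>k\<in>{0..J}. neumann_second_diff J j k * X k m))"
    using assms(1) by (simp only: sum.distrib) (simp add: sum_distrib_left)
  have "complex_of_real (X j k) * A_mat J \<sigma> a m k
      = (if m = k then \<i> / 2 * X j m else 0) + complex_of_real (\<sigma> * a * (X j k * neumann_second_diff J m k))" for k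
    by (simp add: A_mat_eq distrib_left mult_ac)
  then have right: "(\<Sum>k\<in>{0..J}. complex_of_real (X j k) * A_mat J \<sigma> a m k)
      = \<i> / 2 * X j m + complex_of_real (\<sigma> * a * (\<Sum>k\<in>{0..J}. X j k * neumann_second_diff J m k))"
    using assms(2) by (simp only: sum.distrib) (simp add: sum_distrib_left)
  show ?thesis
    unfolding L_op_def left right by (simp add: complex_eq_iff algebra_simps)
qed

lemma frob_norm_L_op_A_mat_bounds:
  fixes J :: nat and X :: "nat \<Rightarrow> nat \<Rightarrow> real"
  assumes "\<sigma> \<ge> 0" "0 \<le> a" "a \<le> 1"
  defines "LX \<equiv> L_op J (A_mat J \<sigma> a) (\<lambda>j m. complex_of_real (X j m))"
  shows "frob_norm J X \<le> frob_norm J LX \<and> frob_norm J LX \<le> (1 + 12 * \<sigma>) * frob_norm J X"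
proof -
  define D where "D j m = (\<Sum>k\<in>{0..J}. neumann_second_diff J j k * X k m) + (\<Sum>k\<in>{0..J}. X j k * neumann_second_diff J m k)"
    for j m
  have "(norm (LX j m))\<^sup>2 = (norm (X j m))\<^sup>2 + (norm (\<sigma> * a * D j m))\<^sup>2" if "j \<in> {0..J}" "m \<in> {0..J}" for j m
    using that by (simp add: LX_def D_def L_op_A_mat_real cmod_power2)
  then have "(frob_norm J LX)\<^sup>2 = (frob_norm J X)\<^sup>2 + (frob_norm J (\<lambda>j m. \<sigma> * a * D j m))\<^sup>2"
    by (simp add: frob_norm_power2 sum.distrib)
  also have "frob_norm J (\<lambda>j m. \<sigma> * a * D j m) = \<sigma> * a * frob_norm J D"
    using assms by (simp add: frob_norm_def power_mult_distrib real_sqrt_mult flip: sum_distrib_left)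
  finally have LX_eq: "frob_norm J LX = sqrt ((frob_norm J X)\<^sup>2 + (\<sigma> * a * frob_norm J D)\<^sup>2)"
    by (metis frob_norm_nonneg real_sqrt_unique)
  have "frob_norm J D \<le> 6 * frob_norm J X + 6 * frob_norm J X"
    unfolding D_def
    by (rule order_trans[OF frob_norm_add_le add_mono[OF frob_norm_mult_left_le frob_norm_mult_right_le]])
       (simp_all add: neumann_second_diff_row_sum_le neumann_second_diff_col_sum_le)
  then have "\<sigma> * a * frob_norm J D \<le> \<sigma> * (12 * frob_norm J X)"
    using assms frob_norm_nonneg[of J D] by (intro mult_mono mult_right_le_one_le) auto
  then have "frob_norm J LX \<le> (1 + 12 * \<sigma>) * frob_norm J X"
    unfolding LX_eq using assms frob_norm_nonneg[of J X] frob_norm_nonneg[of J D]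
    by (intro order_trans[OF sqrt_sum_squares_le_sum_abs]) (simp add: ring_distribs)
  moreover have "frob_norm J X \<le> frob_norm J LX"
    unfolding LX_eq by (rule real_sqrt_sum_squares_ge1)
  ultimately show ?thesis by blast
qed

lemma mesh_ratio_eventually_small:
  fixes l :: "real \<Rightarrow> real" and \<epsilon> :: real
  assumes "\<epsilon> > 0"
    and "\<And>h. h > 0 \<Longrightarrow> l h > 0"
    and "((\<lambda>h. l h / h powr (2 + \<epsilon>)) \<longlongrightarrow> 0) (at_right 0)"
  shows "\<exists>h0 > 0. \<forall>h. 0 < h \<longrightarrow> h < h0 \<longrightarrow>
           0 \<le> 2 * l h / h\<^sup>2 \<and> 2 * l h / h\<^sup>2 \<le> 2 * h powr \<epsilon> \<and> h powr \<epsilon> \<le> 1 / 48"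
proof -
  have "\<forall>\<^sub>F h in at_right 0. l h / h powr (2 + \<epsilon>) < 1"
    using order_tendstoD(2)[OF assms(3)] by simp
  then obtain \<delta> where "\<delta> > 0" and \<delta>: "\<And>h. 0 < h \<Longrightarrow> h < \<delta> \<Longrightarrow> l h / h powr (2 + \<epsilon>) < 1"
    unfolding eventually_at_right_field by auto
  define h0 where "h0 = min \<delta> ((1 / 48) powr (1 / \<epsilon>))"
  have "0 \<le> 2 * l h / h\<^sup>2 \<and> 2 * l h / h\<^sup>2 \<le> 2 * h powr \<epsilon> \<and> h powr \<epsilon> \<le> 1 / 48"
    if "0 < h" "h < h0" for h
  proof (intro conjI)
    show "0 \<le> 2 * l h / h\<^sup>2"
      using assms(2) \<open>0 < h\<close> by (simp add: less_imp_le)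
    have "l h < h powr (2 + \<epsilon>)"
      using \<delta> that \<open>0 < h\<close> by (simp add: h0_def divide_less_eq)
    also have "\<dots> = h\<^sup>2 * h powr \<epsilon>"
      using \<open>0 < h\<close> by (simp add: powr_add powr_realpow)
    finally show "2 * l h / h\<^sup>2 \<le> 2 * h powr \<epsilon>"
      using \<open>0 < h\<close> by (simp add: divide_le_eq mult.commute)
    have "h powr \<epsilon> \<le> ((1 / 48) powr (1 / \<epsilon>)) powr \<epsilon>"
      using that assms(1) by (intro powr_mono2) (auto simp: h0_def)
    then show "h powr \<epsilon> \<le> 1 / 48"
      using assms(1) by (simp add: powr_powr)
  qed
  moreover have "h0 > 0"
    using \<open>\<delta> > 0\<close> by (simp add: h0_def)
  ultimately show ?thesis by blast
qed

theorem lemma4: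
  fixes L0 L1 \<epsilon> :: real and l :: "real \<Rightarrow> real" and \<alpha> :: "nat \<Rightarrow> real"
  assumes "L0 < L1" and "\<epsilon> > 0"
    and "\<And>h. h > 0 \<Longrightarrow> l h > 0"
    and "((\<lambda>h. l h / h powr (2 + \<epsilon>)) \<longlongrightarrow> 0) (at_right 0)"
    and "\<And>n. 0 \<le> \<alpha> n \<and> \<alpha> n \<le> 1"
  shows "\<exists>C > 0. \<exists>h0 > 0. \<forall>J::nat. J > 0 \<longrightarrow> (L1 - L0) / real J < h0 \<longrightarrow>
    (let h = (L1 - L0) / real J; \<sigma> = 2 * l h / h\<^sup>2 in
     \<forall>n. \<forall>X :: nat \<Rightarrow> nat \<Rightarrow> real.
       let LX = L_op J (A_mat J \<sigma> (\<alpha> n)) (\<lambda>j m. complex_of_real (X j m)) in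
       1/2 * frob_norm J X \<le> (1 - C * h powr \<epsilon>) * frob_norm J X
       \<and> (1 - C * h powr \<epsilon>) * frob_norm J X \<le> frob_norm J LX
       \<and> frob_norm J LX \<le> (1 + C * h powr \<epsilon>) * frob_norm J X
       \<and> (1 + C * h powr \<epsilon>) * frob_norm J X \<le> 3/2 * frob_norm J X)"
proof -
  obtain h0 where "h0 > 0" and small: "\<And>h. 0 < h \<Longrightarrow> h < h0 \<Longrightarrow>
      0 \<le> 2 * l h / h\<^sup>2 \<and> 2 * l h / h\<^sup>2 \<le> 2 * h powr \<epsilon> \<and> h powr \<epsilon> \<le> 1 / 48"
    using mesh_ratio_eventually_small[OF assms(2-4)] by blast
  have arith: "1/2 * f \<le> (1 - 24 * e) * f \<and> (1 - 24 * e) * f \<le> g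
      \<and> g \<le> (1 + 24 * e) * f \<and> (1 + 24 * e) * f \<le> 3/2 * f"
    if "\<sigma> \<le> 2 * e" "e \<le> 1 / 48" "0 \<le> e" "0 \<le> f" "f \<le> g" "g \<le> (1 + 12 * \<sigma>) * f"
    for \<sigma> e f g :: real
    using that mult_right_mono[of \<sigma> "2 * e" f] mult_right_mono[of e "1 / 48" f] mult_nonneg_nonneg[of e f]
    by (simp add: algebra_simps)
  have bounds: "1/2 * frob_norm J X \<le> (1 - 24 * h powr \<epsilon>) * frob_norm J X
      \<and> (1 - 24 * h powr \<epsilon>) * frob_norm J X \<le> frob_norm J LX
      \<and> frob_norm J LX \<le> (1 + 24 * h powr \<epsilon>) * frob_norm J X
      \<and> (1 + 24 * h powr \<epsilon>) * frob_norm J X \<le> 3/2 * frob_norm J X"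
    if "J > 0" "h = (L1 - L0) / real J" "h < h0"
      and "LX = L_op J (A_mat J (2 * l h / h\<^sup>2) (\<alpha> n)) (\<lambda>j m. complex_of_real (X j m))"
    for J n X h LX
  proof -
    have "h > 0"
      using that(1,2) assms(1) by simp
    with small \<open>h < h0\<close> have "0 \<le> 2 * l h / h\<^sup>2" "2 * l h / h\<^sup>2 \<le> 2 * h powr \<epsilon>" "h powr \<epsilon> \<le> 1 / 48"
      by auto
    with frob_norm_L_op_A_mat_bounds[of "2 * l h / h\<^sup>2" "\<alpha> n" J X] assms(5) that(4) show ?thesis
      by (intro arith[of "2 * l h / h\<^sup>2"]) (auto simp: frob_norm_nonneg)
  qed
  show ?thesis
    unfolding Let_def using \<open>h0 > 0\<close> bounds[OF _ refl _ refl]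
    by (intro exI[of _ 24] conjI exI[of _ h0] allI impI) auto
qed

end
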